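(* Let $A$ be a braided group in $\mathcal C$ and $B$ a braided group in $\mathcal{YD}(\mathcal C)^A_A$ with right $A$-action $\mu^B_r$ and coaction $\Delta^B_r$. Then the antipode of the cross product $A\rtimes B$ satisfies $S_{A\rtimes B}\circ S_{A\rtimes B}=(S_A^2\otimes S_B^2)\circ\Psi_{B,A}\circ\Psi_{A,B}\circ(A\otimes\sigma_{B/A})$, where $\sigma_{B/A}:=\mu^B_r\circ(B\otimes S_A)\circ\Delta^B_r$.
   Context: $\mathcal C$ is a braided monoidal category, assumed strict, with tensor product $\otimes$, unit $\underline 1$ and braiding $\Psi_{X,Y}:X\otimes Y\to Y\otimes X$. Inside tensor products of morphisms an object name $X$ stands for ${\rm id}_X$. A braided group in a braided category $(\mathcal D,\Phi)$ is a bialgebra $(A,\mu,\eta,\Delta,\epsilon)$ (with $\Delta\circ\mu=(\mu\otimes\mu)\circ(A\otimes\Phi_{A,A}\otimes A)\circ(\Delta\otimes\Delta)$ and unit/counit compatibilities) with antipode $S$. $\mathcal{YD}(\mathcal C)^A_A$ is the braided category of right crossed modules over $A$: right modules $\mu_r:X\otimes A\to X$ and comodules $\Delta_r:X\to X\otimes A$ with $(X\otimes\mu)\circ(\Psi_{A,X}\otimes A)\circ(A\otimes(\Delta_r\circ\mu_r))\circ(\Psi_{X,A}\otimes A)\circ(X\otimes\Delta)=(\mu_r\otimes\mu)\circ(X\otimes\Psi_{A,A}\otimes A)\circ(\Delta_r\otimes\Delta)$; tensor product action $(\mu^X_r\otimes\mu^Y_r)\circ(X\otimes\Psi_{Y,A}\otimes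 A)\circ(X\otimes Y\otimes\Delta)$, coaction $(X\otimes Y\otimes\mu)\circ(X\otimes\Psi_{A,Y}\otimes A)\circ(\Delta^X_r\otimes\Delta^Y_r)$; braiding $(Y\otimes\mu^X_r)\circ(\Psi_{X,Y}\otimes A)\circ(X\otimes\Delta^Y_r)$. The cross product $A\rtimes B$ is $A\otimes B$ with multiplication $(\mu_A\otimes\mu_B)\circ(A\otimes A\otimes\mu^B_r\otimes B)\circ(A\otimes\Psi_{B,A}\otimes A\otimes B)\circ(A\otimes B\otimes\Delta_A\otimes B)$, unit $\eta_A\otimes\eta_B$, comultiplication $(A\otimes B\otimes\mu_A\otimes B)\circ(A\otimes\Psi_{A,B}\otimes A\otimes B)\circ(A\otimes A\otimes\Delta^B_r\otimes B)\circ(\Delta_A\otimes\Delta_B)$, counit $\epsilon_A\otimes\epsilon_B$, and antipode $S_{A\rtimes B}=(A\otimes\mu^B_r)\circ(\Psi_{B,A}\otimes A)\circ(S_B\otimes(\Delta_A\circ S_A\circ\mu_A))\circ(\Psi_{A,B}\otimes A)\circ(A\otimes\Delta^B_r)$. *)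

theory Defs
  imports Main
begin

record ('o, 'm) bmcat =
  Arr :: "'m \<Rightarrow> bool"
  Dom :: "'m \<Rightarrow> 'o"
  Cod :: "'m \<Rightarrow> 'o"
  Id  :: "'o \<Rightarrow> 'm"
  Cmp :: "'m \<Rightarrow> 'm \<Rightarrow> 'm"   (* Cmp C g f = g o f *)
  TO  :: "'o \<Rightarrow> 'o \<Rightarrow> 'o"
  TM  :: "'m \<Rightarrow> 'm \<Rightarrow> 'm"
  UnitO  :: "'o"
  Br  :: "'o \<Rightarrow> 'o \<Rightarrow> 'm"   (* braiding Psi_{X,Y} : X (x) Y -> Y (x) X *)

definition hom :: "('o, 'm) bmcat \<Rightarrow> 'm \<Rightarrow> 'o \<Rightarrow> 'o \<Rightarrow> bool" where
  "hom C f a b \<longleftrightarrow> Arr C f \<and> Dom C f = a \<and> Cod C f = b"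

definition braided_strict_monoidal :: "('o, 'm) bmcat \<Rightarrow> bool" where
  "braided_strict_monoidal C \<longleftrightarrow>
    \<comment> \<open>category\<close>
    (\<forall>a. hom C (Id C a) a a) \<and>
    (\<forall>f g. Arr C f \<and> Arr C g \<and> Dom C g = Cod C f \<longrightarrow>
        hom C (Cmp C g f) (Dom C f) (Cod C g)) \<and>
    (\<forall>f g h. Arr C f \<and> Arr C g \<and> Arr C h \<and> Dom C g = Cod C f \<and> Dom C h = Cod C g \<longrightarrow>
        Cmp C h (Cmp C g f) = Cmp C (Cmp C h g) f) \<and>
    (\<forall>f. Arr C f \<longrightarrow> Cmp C (Id C (Cod C f)) f = f \<and> Cmp C f (Id C (Dom C f)) = f) \<and>
    \<comment> \<open>tensor bifunctor\<close>
    (\<forall>f g. Arr C f \<and> Arr C g \<longrightarrow>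
        hom C (TM C f g) (TO C (Dom C f) (Dom C g)) (TO C (Cod C f) (Cod C g))) \<and>
    (\<forall>a b. TM C (Id C a) (Id C b) = Id C (TO C a b)) \<and>
    (\<forall>f f' g g'. Arr C f \<and> Arr C f' \<and> Arr C g \<and> Arr C g' \<and>
        Dom C g = Cod C f \<and> Dom C g' = Cod C f' \<longrightarrow>
        Cmp C (TM C g g') (TM C f f') = TM C (Cmp C g f) (Cmp C g' f')) \<and>
    \<comment> \<open>strictness\<close>
    (\<forall>a b c. TO C (TO C a b) c = TO C a (TO C b c)) \<and>
    (\<forall>a. TO C (UnitO C) a = a \<and> TO C a (UnitO C) = a) \<and>
    (\<forall>f g h. Arr C f \<and> Arr C g \<and> Arr C h \<longrightarrow> TM C (TM C f g) h = TM C f (TM C g h)) \<and>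
    (\<forall>f. Arr C f \<longrightarrow> TM C (Id C (UnitO C)) f = f \<and> TM C f (Id C (UnitO C)) = f) \<and>
    \<comment> \<open>braiding: invertible, natural, hexagon identities\<close>
    (\<forall>a b. hom C (Br C a b) (TO C a b) (TO C b a)) \<and>
    (\<forall>a b. \<exists>g. hom C g (TO C b a) (TO C a b) \<and>
        Cmp C g (Br C a b) = Id C (TO C a b) \<and> Cmp C (Br C a b) g = Id C (TO C b a)) \<and>
    (\<forall>f g. Arr C f \<and> Arr C g \<longrightarrow>
        Cmp C (Br C (Cod C f) (Cod C g)) (TM C f g) = Cmp C (TM C g f) (Br C (Dom C f) (Dom C g))) \<and>
    (\<forall>a b c. Br C a (TO C b c) = Cmp C (TM C (Id C b) (Br C a c)) (TM C (Br C a b) (Id C c))) \<and>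
    (\<forall>a b c. Br C (TO C a b) c = Cmp C (TM C (Br C a c) (Id C b)) (TM C (Id C a) (Br C b c)))"

text \<open>Hopf algebra axioms for an object X with structure maps, relative to a braiding
  morphism beta : X (x) X -> X (x) X used in the bialgebra compatibility.\<close>
definition hopf_ax :: "('o, 'm) bmcat \<Rightarrow> 'o \<Rightarrow> 'm \<Rightarrow> 'm \<Rightarrow> 'm \<Rightarrow> 'm \<Rightarrow> 'm \<Rightarrow> 'm \<Rightarrow> bool" where
  "hopf_ax C X mu eta De ep S beta \<longleftrightarrow>
    hom C mu (TO C X X) X \<and> hom C eta (UnitO C) X \<and> hom C De X (TO C X X) \<and>
    hom C ep X (UnitO C) \<and> hom C S X X \<and> hom C beta (TO C X X) (TO C X X) \<and>
    Cmp C mu (TM C mu (Id C X)) = Cmp C mu (TM C (Id C X) mu) \<and>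
    Cmp C mu (TM C eta (Id C X)) = Id C X \<and> Cmp C mu (TM C (Id C X) eta) = Id C X \<and>
    Cmp C (TM C De (Id C X)) De = Cmp C (TM C (Id C X) De) De \<and>
    Cmp C (TM C ep (Id C X)) De = Id C X \<and> Cmp C (TM C (Id C X) ep) De = Id C X \<and>
    Cmp C De mu = Cmp C (TM C mu mu)
        (Cmp C (TM C (TM C (Id C X) beta) (Id C X)) (TM C De De)) \<and>
    Cmp C De eta = TM C eta eta \<and> Cmp C ep mu = TM C ep ep \<and> Cmp C ep eta = Id C (UnitO C) \<and>
    Cmp C mu (Cmp C (TM C S (Id C X)) De) = Cmp C eta ep \<and>
    Cmp C mu (Cmp C (TM C (Id C X) S) De) = Cmp C eta ep"

definition braided_group :: "('o, 'm) bmcat \<Rightarrow> 'o \<Rightarrow> 'm \<Rightarrow> 'm \<Rightarrow> 'm \<Rightarrow> 'm \<Rightarrow> 'm \<Rightarrow> bool" where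
  "braided_group C A mu eta De ep S \<longleftrightarrow> hopf_ax C A mu eta De ep S (Br C A A)"

definition rmod :: "('o, 'm) bmcat \<Rightarrow> 'o \<Rightarrow> 'm \<Rightarrow> 'm \<Rightarrow> 'o \<Rightarrow> 'm \<Rightarrow> bool" where
  "rmod C A muA etaA X act \<longleftrightarrow>
    hom C act (TO C X A) X \<and>
    Cmp C act (TM C act (Id C A)) = Cmp C act (TM C (Id C X) muA) \<and>
    Cmp C act (TM C (Id C X) etaA) = Id C X"

definition rcomod :: "('o, 'm) bmcat \<Rightarrow> 'o \<Rightarrow> 'm \<Rightarrow> 'm \<Rightarrow> 'o \<Rightarrow> 'm \<Rightarrow> bool" where
  "rcomod C A DeA epA X coact \<longleftrightarrow>
    hom C coact X (TO C X A) \<and>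
    Cmp C (TM C coact (Id C A)) coact = Cmp C (TM C (Id C X) DeA) coact \<and>
    Cmp C (TM C (Id C X) epA) coact = Id C X"

definition yd_mod :: "('o, 'm) bmcat \<Rightarrow> 'o \<Rightarrow> 'm \<Rightarrow> 'm \<Rightarrow> 'm \<Rightarrow> 'm \<Rightarrow> 'o \<Rightarrow> 'm \<Rightarrow> 'm \<Rightarrow> bool" where
  "yd_mod C A muA etaA DeA epA X act coact \<longleftrightarrow>
    rmod C A muA etaA X act \<and> rcomod C A DeA epA X coact \<and>
    Cmp C (TM C (Id C X) muA)
      (Cmp C (TM C (Br C A X) (Id C A))
        (Cmp C (TM C (Id C A) (Cmp C coact act))
          (Cmp C (TM C (Br C X A) (Id C A)) (TM C (Id C X) DeA))))
    = Cmp C (TM C act muA)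
        (Cmp C (TM C (TM C (Id C X) (Br C A A)) (Id C A)) (TM C coact DeA))"

definition yd_hom :: "('o, 'm) bmcat \<Rightarrow> 'o \<Rightarrow> 'm \<Rightarrow> 'm \<Rightarrow> 'm \<Rightarrow> 'm \<Rightarrow> 'm \<Rightarrow> bool" where
  "yd_hom C A f actX coactX actY coactY \<longleftrightarrow>
    Cmp C f actX = Cmp C actY (TM C f (Id C A)) \<and>
    Cmp C coactY f = Cmp C (TM C f (Id C A)) coactX"

definition yd_tens_act :: "('o, 'm) bmcat \<Rightarrow> 'o \<Rightarrow> 'm \<Rightarrow> 'o \<Rightarrow> 'm \<Rightarrow> 'o \<Rightarrow> 'm \<Rightarrow> 'm" where
  "yd_tens_act C A DeA X actX Y actY =
    Cmp C (TM C actX actY)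
      (Cmp C (TM C (TM C (Id C X) (Br C Y A)) (Id C A)) (TM C (Id C (TO C X Y)) DeA))"

definition yd_tens_coact :: "('o, 'm) bmcat \<Rightarrow> 'o \<Rightarrow> 'm \<Rightarrow> 'o \<Rightarrow> 'm \<Rightarrow> 'o \<Rightarrow> 'm \<Rightarrow> 'm" where
  "yd_tens_coact C A muA X coactX Y coactY =
    Cmp C (TM C (Id C (TO C X Y)) muA)
      (Cmp C (TM C (TM C (Id C X) (Br C A Y)) (Id C A)) (TM C coactX coactY))"

definition yd_braid :: "('o, 'm) bmcat \<Rightarrow> 'o \<Rightarrow> 'o \<Rightarrow> 'm \<Rightarrow> 'o \<Rightarrow> 'm \<Rightarrow> 'm" where
  "yd_braid C A X actX Y coactY =
    Cmp C (TM C (Id C Y) actX) (Cmp C (TM C (Br C X Y) (Id C A)) (TM C (Id C X) coactY))"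

text \<open>A braided group B in YD(C)^A_A: B is a crossed module, its structure maps are
  morphisms of crossed modules (the unit object carrying the trivial action epsilon_A and
  coaction eta_A, tensor products carrying the tensor product structures), and the Hopf
  axioms hold with respect to the braiding of YD(C)^A_A.\<close>
definition braided_group_YD ::
  "('o, 'm) bmcat \<Rightarrow> 'o \<Rightarrow> 'm \<Rightarrow> 'm \<Rightarrow> 'm \<Rightarrow> 'm \<Rightarrow>
   'o \<Rightarrow> 'm \<Rightarrow> 'm \<Rightarrow> 'm \<Rightarrow> 'm \<Rightarrow> 'm \<Rightarrow> 'm \<Rightarrow> 'm \<Rightarrow> bool" where
  "braided_group_YD C A muA etaA DeA epA B act coact mu eta De ep S \<longleftrightarrow>
    yd_mod C A muA etaA DeA epA B act coact \<and>
    hopf_ax C B mu eta De ep S (yd_braid C A B act B coact) \<and>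
    (let actBB = yd_tens_act C A DeA B act B act;
         coactBB = yd_tens_coact C A muA B coact B coact
     in yd_hom C A mu actBB coactBB act coact \<and>
        yd_hom C A eta epA etaA act coact \<and>
        yd_hom C A De act coact actBB coactBB \<and>
        yd_hom C A ep act coact epA etaA \<and>
        yd_hom C A S act coact act coact)"

definition cross_antipode ::
  "('o, 'm) bmcat \<Rightarrow> 'o \<Rightarrow> 'm \<Rightarrow> 'm \<Rightarrow> 'm \<Rightarrow> 'o \<Rightarrow> 'm \<Rightarrow> 'm \<Rightarrow> 'm \<Rightarrow> 'm" where
  "cross_antipode C A muA DeA SA B act coact SB =
    Cmp C (TM C (Id C A) act)
     (Cmp C (TM C (Br C B A) (Id C A))
      (Cmp C (TM C SB (Cmp C DeA (Cmp C SA muA)))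
       (Cmp C (TM C (Br C A B) (Id C A)) (TM C (Id C A) coact))))"

definition sigma_BA :: "('o, 'm) bmcat \<Rightarrow> 'm \<Rightarrow> 'o \<Rightarrow> 'm \<Rightarrow> 'm \<Rightarrow> 'm" where
  "sigma_BA C SA B act coact = Cmp C act (Cmp C (TM C (Id C B) SA) coact)"

end

theory Submission
  imports Defs
begin

text \<open>All morphisms involved are composites of layers \<open>id \<otimes> g \<otimes> id\<close>, where \<open>g\<close> is a
  structure map of \<open>A\<close> or \<open>B\<close> or a braiding. We encode such composites as string diagrams.
  Exchanging two boxes on disjoint wires, naturality and the hexagon identities of the braiding,
  and replacing a subdiagram by one of equal value are sound rewrite steps, so equations between
  diagrams can be certified by explicit rewrite sequences. Besides the
  axioms, the rewriting uses that \<open>S\<^sub>A\<close> is braided anti-multiplicative and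
  anti-comultiplicative. Squaring the cross product antipode, the crossed-module condition lets
  the inner coaction pass the inner action; then the two actions and the two coactions of \<open>B\<close>
  merge, and the antipode, counit and unit axioms of \<open>A\<close> cancel the remaining factors of
  \<open>A\<close>.\<close>

section \<open>Strict braided monoidal categories\<close>

locale braided_strict_monoidal_cat =
  fixes C :: "('o, 'm) bmcat"
  assumes braided_strict_monoidal: "braided_strict_monoidal C"
begin

lemmas structure_axioms = braided_strict_monoidal[unfolded braided_strict_monoidal_def hom_def]

lemma id_hom: "hom C (Id C a) a a"
  using structure_axioms by (simp add: hom_def)

lemma comp_hom: "hom C f a b \<Longrightarrow> hom C g b c \<Longrightarrow> hom C (Cmp C g f) a c"
  using structure_axioms unfolding hom_def by metis

lemma comp_assoc:
  "hom C f a b \<Longrightarrow> hom C g b c \<Longrightarrow> hom C h c d \<Longrightarrow> Cmp C h (Cmp C g f) = Cmp C (Cmp C h g) f"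
  using structure_axioms unfolding hom_def by metis

lemma comp_id_left: "hom C f a b \<Longrightarrow> Cmp C (Id C b) f = f"
  using structure_axioms unfolding hom_def by metis

lemma comp_id_right: "hom C f a b \<Longrightarrow> Cmp C f (Id C a) = f"
  using structure_axioms unfolding hom_def by metis

lemma tensor_hom: "hom C f a b \<Longrightarrow> hom C g c d \<Longrightarrow> hom C (TM C f g) (TO C a c) (TO C b d)"
  using structure_axioms unfolding hom_def by metis

lemma tensor_id: "TM C (Id C a) (Id C b) = Id C (TO C a b)"
  using structure_axioms by simp

lemma interchange:
  "hom C f a b \<Longrightarrow> hom C g b c \<Longrightarrow> hom C f' a' b' \<Longrightarrow> hom C g' b' c' \<Longrightarrow>
   Cmp C (TM C g g') (TM C f f') = TM C (Cmp C g f) (Cmp C g' f')"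
  using structure_axioms unfolding hom_def by metis

lemma tensor_ob_assoc: "TO C (TO C a b) c = TO C a (TO C b c)"
  using structure_axioms by simp

lemma tensor_ob_unit_left [simp]: "TO C (UnitO C) a = a"
  and tensor_ob_unit_right [simp]: "TO C a (UnitO C) = a"
  using structure_axioms by simp_all

lemma tensor_assoc: "Arr C f \<Longrightarrow> Arr C g \<Longrightarrow> Arr C h \<Longrightarrow> TM C (TM C f g) h = TM C f (TM C g h)"
  using structure_axioms by simp

lemma tensor_unit_left [simp]: "Arr C f \<Longrightarrow> TM C (Id C (UnitO C)) f = f"
  and tensor_unit_right [simp]: "Arr C f \<Longrightarrow> TM C f (Id C (UnitO C)) = f"
  using structure_axioms by simp_all

lemma braid_hom: "hom C (Br C a b) (TO C a b) (TO C b a)"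
  using structure_axioms by (simp add: hom_def)

lemma braid_invertible: "\<exists>g. hom C g (TO C b a) (TO C a b) \<and> Cmp C g (Br C a b) = Id C (TO C a b)"
  using structure_axioms unfolding hom_def by metis

lemma braid_natural:
  "hom C f a b \<Longrightarrow> hom C g c d \<Longrightarrow> Cmp C (Br C b d) (TM C f g) = Cmp C (TM C g f) (Br C a c)"
  using structure_axioms unfolding hom_def by metis

lemma braid_tensor_right: "Br C a (TO C b c) = Cmp C (TM C (Id C b) (Br C a c)) (TM C (Br C a b) (Id C c))"
  and braid_tensor_left: "Br C (TO C a b) c = Cmp C (TM C (Br C a c) (Id C b)) (TM C (Id C a) (Br C b c))"
  using structure_axioms by simp_all

lemma idempotent_iso_eq_id:
  assumes e: "hom C e a a" and idem: "Cmp C e e = e"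
    and inv: "\<exists>g. hom C g a a \<and> Cmp C g e = Id C a"
  shows "e = Id C a"
proof -
  obtain g where g: "hom C g a a" "Cmp C g e = Id C a" using inv by blast
  have "Id C a = Cmp C g (Cmp C e e)" using idem g by simp
  also have "\<dots> = e" using comp_assoc[OF e e g(1)] g(2) comp_id_left[OF e] by simp
  finally show ?thesis by simp
qed

lemma braid_unit_right: "Br C a (UnitO C) = Id C a"
proof (rule idempotent_iso_eq_id)
  show e: "hom C (Br C a (UnitO C)) a a"
    using braid_hom[of a "UnitO C"] by simp
  show "Cmp C (Br C a (UnitO C)) (Br C a (UnitO C)) = Br C a (UnitO C)"
    using braid_tensor_right[of a "UnitO C" "UnitO C"] e by (simp add: hom_def)
  show "\<exists>g. hom C g a a \<and> Cmp C g (Br C a (UnitO C)) = Id C a"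
    using braid_invertible[where a = a and b = "UnitO C"] by simp
qed

lemma braid_unit_left: "Br C (UnitO C) a = Id C a"
proof (rule idempotent_iso_eq_id)
  show e: "hom C (Br C (UnitO C) a) a a"
    using braid_hom[of "UnitO C" a] by simp
  show "Cmp C (Br C (UnitO C) a) (Br C (UnitO C) a) = Br C (UnitO C) a"
    using braid_tensor_left[of "UnitO C" "UnitO C" a] e by (simp add: hom_def)
  show "\<exists>g. hom C g a a \<and> Cmp C g (Br C (UnitO C) a) = Id C a"
    using braid_invertible[where a = "UnitO C" and b = a] by simp
qed

lemma hom_Arr: "hom C f a b \<Longrightarrow> Arr C f"
  by (simp add: hom_def)

lemma Arr_Id [simp]: "Arr C (Id C a)"
  and Dom_Id [simp]: "Dom C (Id C a) = a"
  and Cod_Id [simp]: "Cod C (Id C a) = a"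
  using id_hom by (simp_all add: hom_def)

lemma Arr_TM [simp]: "Arr C f \<Longrightarrow> Arr C g \<Longrightarrow> Arr C (TM C f g)"
  and Dom_TM [simp]: "Arr C f \<Longrightarrow> Arr C g \<Longrightarrow> Dom C (TM C f g) = TO C (Dom C f) (Dom C g)"
  and Cod_TM [simp]: "Arr C f \<Longrightarrow> Arr C g \<Longrightarrow> Cod C (TM C f g) = TO C (Cod C f) (Cod C g)"
  using tensor_hom unfolding hom_def by auto

lemma Arr_Cmp [simp]: "Arr C f \<Longrightarrow> Arr C g \<Longrightarrow> Dom C g = Cod C f \<Longrightarrow> Arr C (Cmp C g f)"
  and Dom_Cmp [simp]: "Arr C f \<Longrightarrow> Arr C g \<Longrightarrow> Dom C g = Cod C f \<Longrightarrow> Dom C (Cmp C g f) = Dom C f"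
  and Cod_Cmp [simp]: "Arr C f \<Longrightarrow> Arr C g \<Longrightarrow> Dom C g = Cod C f \<Longrightarrow> Cod C (Cmp C g f) = Cod C g"
  using comp_hom unfolding hom_def by auto

lemma Arr_Br [simp]: "Arr C (Br C a b)"
  and Dom_Br [simp]: "Dom C (Br C a b) = TO C a b"
  and Cod_Br [simp]: "Cod C (Br C a b) = TO C b a"
  using braid_hom by (simp_all add: hom_def)

lemma Cmp_assoc_right:
  "Arr C f \<Longrightarrow> Arr C g \<Longrightarrow> Arr C h \<Longrightarrow> Dom C g = Cod C f \<Longrightarrow> Dom C h = Cod C g \<Longrightarrow>
   Cmp C (Cmp C h g) f = Cmp C h (Cmp C g f)"
  using comp_assoc unfolding hom_def by metis

lemma TM_Id_Cmp:
  "Arr C f \<Longrightarrow> Arr C g \<Longrightarrow> Dom C g = Cod C f \<Longrightarrow>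
   TM C (Id C a) (Cmp C g f) = Cmp C (TM C (Id C a) g) (TM C (Id C a) f)"
  using interchange[of "Id C a" a a "Id C a" a f "Dom C f" "Cod C f" g "Cod C g"]
  by (simp add: hom_def comp_id_left id_hom)

lemma TM_Cmp_Id:
  "Arr C f \<Longrightarrow> Arr C g \<Longrightarrow> Dom C g = Cod C f \<Longrightarrow>
   TM C (Cmp C g f) (Id C a) = Cmp C (TM C g (Id C a)) (TM C f (Id C a))"
  using interchange[of f "Dom C f" "Cod C f" g "Cod C g" "Id C a" a a "Id C a" a]
  by (simp add: hom_def comp_id_left id_hom)

lemma TM_eq_first_then_second:
  "Arr C f \<Longrightarrow> Arr C g \<Longrightarrow> TM C f g = Cmp C (TM C (Id C (Cod C f)) g) (TM C f (Id C (Dom C g)))"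
  using interchange[of f "Dom C f" "Cod C f" "Id C (Cod C f)" "Cod C f" "Id C (Dom C g)" "Dom C g" "Dom C g" g "Cod C g"]
  by (simp add: hom_def comp_id_left comp_id_right id_hom)

lemma TM_eq_second_then_first:
  "Arr C f \<Longrightarrow> Arr C g \<Longrightarrow> TM C f g = Cmp C (TM C f (Id C (Cod C g))) (TM C (Id C (Dom C f)) g)"
  using interchange[of "Id C (Dom C f)" "Dom C f" "Dom C f" f "Cod C f" g "Dom C g" "Cod C g" "Id C (Cod C g)" "Cod C g"]
  by (simp add: hom_def comp_id_left comp_id_right id_hom)

end

section \<open>String diagrams and their rewriting\<close>

named_theorems rule_defs and valid_rules

text \<open>A layer \<open>(l, g, r)\<close> stands for \<open>id\<^sub>l \<otimes> g \<otimes> id\<^sub>r\<close>, a diagram for the composite of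
  its layers with the head applied first, and a rule \<open>(s, L, R)\<close> for the equation between the
  diagrams \<open>L\<close> and \<open>R\<close> with source \<open>s\<close>.\<close>

datatype ('w, 'b) gen = Box 'b | Braid "'w list" "'w list"

type_synonym ('w, 'b) layer = "'w list \<times> ('w, 'b) gen \<times> 'w list"
type_synonym ('w, 'b) diagram = "('w, 'b) layer list"
type_synonym ('w, 'b) rule = "'w list \<times> ('w, 'b) diagram \<times> ('w, 'b) diagram"

datatype ('w, 'b) step = Swap nat | Fwd "('w, 'b) rule" nat | Bwd "('w, 'b) rule" nat

fun whisker_layer :: "'w list \<Rightarrow> 'w list \<Rightarrow> ('w, 'b) layer \<Rightarrow> ('w, 'b) layer" where
  "whisker_layer xs ys (l, g, r) = (xs @ l, g, r @ ys)"

text \<open>The outer wires \<open>xs\<close> and \<open>ys\<close> of the occurrence are read off from its first layer.\<close>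
fun rewrite_at :: "('w, 'b) rule \<Rightarrow> nat \<Rightarrow> ('w, 'b) diagram \<Rightarrow> ('w, 'b) diagram option" where
  "rewrite_at (s, L, R) i D =
    (let (l, _, r) = D ! i; (l0, _, r0) = hd L;
         xs = take (length l - length l0) l; ys = drop (length r0) r
     in if i < length D \<and> L \<noteq> [] \<and> take (length L) (drop i D) = map (whisker_layer xs ys) L
        then Some (take i D @ map (whisker_layer xs ys) R @ drop (i + length L) D) else None)"

locale diagram_signature =
  fixes box_dom box_cod :: "'b \<Rightarrow> 'w list"
begin

fun gen_dom :: "('w, 'b) gen \<Rightarrow> 'w list" where
  "gen_dom (Box b) = box_dom b"
| "gen_dom (Braid l r) = l @ r"

fun gen_cod :: "('w, 'b) gen \<Rightarrow> 'w list" where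
  "gen_cod (Box b) = box_cod b"
| "gen_cod (Braid l r) = r @ l"

fun layer_dom :: "('w, 'b) layer \<Rightarrow> 'w list" where
  "layer_dom (l, g, r) = l @ gen_dom g @ r"

fun layer_cod :: "('w, 'b) layer \<Rightarrow> 'w list" where
  "layer_cod (l, g, r) = l @ gen_cod g @ r"

fun diagram_cod :: "'w list \<Rightarrow> ('w, 'b) diagram \<Rightarrow> 'w list" where
  "diagram_cod s [] = s"
| "diagram_cod s (x # D) = diagram_cod (layer_cod x) D"

fun well_typed :: "'w list \<Rightarrow> ('w, 'b) diagram \<Rightarrow> bool" where
  "well_typed s [] = True"
| "well_typed s (x # D) \<longleftrightarrow> layer_dom x = s \<and> well_typed (layer_cod x) D"

lemma well_typed_append:
  "well_typed s (D @ E) \<longleftrightarrow> well_typed s D \<and> well_typed (diagram_cod s D) E"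
  by (induction D arbitrary: s) auto

lemma diagram_cod_append: "diagram_cod s (D @ E) = diagram_cod (diagram_cod s D) E"
  by (induction D arbitrary: s) auto

lemma layer_dom_whisker [simp]: "layer_dom (whisker_layer xs ys x) = xs @ layer_dom x @ ys"
  and layer_cod_whisker [simp]: "layer_cod (whisker_layer xs ys x) = xs @ layer_cod x @ ys"
  by (cases x; simp)+

lemma well_typed_whisker:
  "well_typed p L \<Longrightarrow>
   well_typed (xs @ p @ ys) (map (whisker_layer xs ys) L) \<and>
   diagram_cod (xs @ p @ ys) (map (whisker_layer xs ys) L) = xs @ diagram_cod p L @ ys"
  by (induction L arbitrary: p) auto

text \<open>The box \<open>g\<close> lies to the left of \<open>h\<close> in the first branch and to its right in the second.\<close>
fun swap_pair :: "('w, 'b) layer \<Rightarrow> ('w, 'b) layer \<Rightarrow> (('w, 'b) layer \<times> ('w, 'b) layer) option" where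
  "swap_pair (l1, g, r1) (l2, h, r2) =
    (if length l1 + length (gen_cod g) \<le> length l2 then
       (let M = drop (length l1 + length (gen_cod g)) l2 in
        if l2 = l1 @ gen_cod g @ M \<and> r1 = M @ gen_dom h @ r2
        then Some ((l1 @ gen_dom g @ M, h, r2), (l1, g, M @ gen_cod h @ r2)) else None)
     else if length l2 + length (gen_dom h) \<le> length l1 then
       (let M = drop (length l2 + length (gen_dom h)) l1 in
        if l1 = l2 @ gen_dom h @ M \<and> r2 = M @ gen_cod g @ r1
        then Some ((l2, h, M @ gen_dom g @ r1), (l2 @ gen_cod h @ M, g, r1)) else None)
     else None)"

definition swap_at :: "nat \<Rightarrow> ('w, 'b) diagram \<Rightarrow> ('w, 'b) diagram option" where
  "swap_at i D =
    (if Suc i < length D then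
       (case swap_pair (D ! i) (D ! Suc i) of
          None \<Rightarrow> None
        | Some (y, x) \<Rightarrow> Some (take i D @ [y, x] @ drop (Suc (Suc i)) D))
     else None)"

fun apply_step :: "('w, 'b) step \<Rightarrow> ('w, 'b) diagram \<Rightarrow> ('w, 'b) diagram option" where
  "apply_step (Swap i) D = swap_at i D"
| "apply_step (Fwd r i) D = rewrite_at r i D"
| "apply_step (Bwd (s, L, R) i) D = rewrite_at (s, R, L) i D"

fun run_steps :: "('w, 'b) step list \<Rightarrow> ('w, 'b) diagram \<Rightarrow> ('w, 'b) diagram option" where
  "run_steps [] D = Some D"
| "run_steps (st # sts) D = Option.bind (apply_step st D) (run_steps sts)"

definition braid_natural_left :: "'w list \<Rightarrow> ('w, 'b) gen \<Rightarrow> 'w list \<Rightarrow> 'w list \<Rightarrow> ('w, 'b) rule" where [rule_defs]: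
  "braid_natural_left l g r Y =
    (l @ gen_dom g @ r @ Y,
     [(l, g, r @ Y), ([], Braid (l @ gen_cod g @ r) Y, [])],
     [([], Braid (l @ gen_dom g @ r) Y, []), (Y @ l, g, r)])"

definition braid_natural_right :: "'w list \<Rightarrow> 'w list \<Rightarrow> ('w, 'b) gen \<Rightarrow> 'w list \<Rightarrow> ('w, 'b) rule" where [rule_defs]:
  "braid_natural_right X l g r =
    (X @ l @ gen_dom g @ r,
     [(X @ l, g, r), ([], Braid X (l @ gen_cod g @ r), [])],
     [([], Braid X (l @ gen_dom g @ r), []), (l, g, r @ X)])"

definition braid_split_right :: "'w list \<Rightarrow> 'w list \<Rightarrow> 'w list \<Rightarrow> ('w, 'b) rule" where [rule_defs]:
  "braid_split_right X Y1 Y2 =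
    (X @ Y1 @ Y2, [([], Braid X (Y1 @ Y2), [])], [([], Braid X Y1, Y2), (Y1, Braid X Y2, [])])"

definition braid_split_left :: "'w list \<Rightarrow> 'w list \<Rightarrow> 'w list \<Rightarrow> ('w, 'b) rule" where [rule_defs]:
  "braid_split_left X1 X2 Y =
    (X1 @ X2 @ Y, [([], Braid (X1 @ X2) Y, [])], [(X1, Braid X2 Y, []), ([], Braid X1 Y, X2)])"

definition braid_empty_right :: "'w list \<Rightarrow> ('w, 'b) rule" where [rule_defs]:
  "braid_empty_right X = (X, [([], Braid X [], [])], [])"

definition braid_empty_left :: "'w list \<Rightarrow> ('w, 'b) rule" where [rule_defs]:
  "braid_empty_left X = (X, [([], Braid [] X, [])], [])"

end

section \<open>Values of string diagrams\<close>

locale wire_model = braided_strict_monoidal_cat C for C :: "('o, 'm) bmcat" +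
  fixes wire_ob :: "'w \<Rightarrow> 'o"
begin

definition ob_of :: "'w list \<Rightarrow> 'o" where
  "ob_of ws = foldr (\<lambda>w. TO C (wire_ob w)) ws (UnitO C)"

lemma ob_of_Nil [simp]: "ob_of [] = UnitO C"
  and ob_of_Cons: "ob_of (w # ws) = TO C (wire_ob w) (ob_of ws)"
  by (simp_all add: ob_of_def)

lemma ob_of_append: "ob_of (ws @ vs) = TO C (ob_of ws) (ob_of vs)"
  by (induction ws) (simp_all add: ob_of_Cons tensor_ob_assoc)

lemma Id_ob_of_append: "Id C (ob_of (ws @ vs)) = TM C (Id C (ob_of ws)) (Id C (ob_of vs))"
  by (simp add: ob_of_append tensor_id)

end

locale diagram_model = wire_model C wire_ob + diagram_signature box_dom box_cod
  for C :: "('o, 'm) bmcat" and wire_ob :: "'w \<Rightarrow> 'o" and box_dom box_cod :: "'b \<Rightarrow> 'w list" +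
  fixes box_arr :: "'b \<Rightarrow> 'm"
  assumes box_hom: "hom C (box_arr b) (ob_of (box_dom b)) (ob_of (box_cod b))"
begin

fun gen_arr :: "('w, 'b) gen \<Rightarrow> 'm" where
  "gen_arr (Box b) = box_arr b"
| "gen_arr (Braid l r) = Br C (ob_of l) (ob_of r)"

definition whisker :: "'w list \<Rightarrow> 'w list \<Rightarrow> 'm \<Rightarrow> 'm" where
  "whisker l r f = TM C (Id C (ob_of l)) (TM C f (Id C (ob_of r)))"

fun layer_arr :: "('w, 'b) layer \<Rightarrow> 'm" where
  "layer_arr (l, g, r) = whisker l r (gen_arr g)"

text \<open>The equation for singletons keeps a spurious identity out of the value of a nonempty diagram.\<close>
fun diagram_arr :: "'w list \<Rightarrow> ('w, 'b) diagram \<Rightarrow> 'm" where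
  "diagram_arr s [] = Id C (ob_of s)"
| "diagram_arr s [x] = layer_arr x"
| "diagram_arr s (x # y # D) = Cmp C (diagram_arr (layer_cod x) (y # D)) (layer_arr x)"

fun valid_rule :: "('w, 'b) rule \<Rightarrow> bool" where
  "valid_rule (s, L, R) \<longleftrightarrow>
     well_typed s L \<and> well_typed s R \<and> diagram_cod s L = diagram_cod s R \<and>
     diagram_arr s L = diagram_arr s R"

fun valid_step :: "('w, 'b) step \<Rightarrow> bool" where
  "valid_step (Swap i) = True"
| "valid_step (Fwd r i) = valid_rule r"
| "valid_step (Bwd r i) = valid_rule r"

lemma gen_hom: "hom C (gen_arr g) (ob_of (gen_dom g)) (ob_of (gen_cod g))"
  by (cases g) (simp_all add: box_hom braid_hom ob_of_append)

lemma whisker_Nil_left: "Arr C f \<Longrightarrow> whisker [] r f = TM C f (Id C (ob_of r))"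
  and whisker_Nil_right: "Arr C f \<Longrightarrow> whisker l [] f = TM C (Id C (ob_of l)) f"
  by (simp_all add: whisker_def)

lemma whisker_hom: "hom C f (ob_of p) (ob_of q) \<Longrightarrow> hom C (whisker l r f) (ob_of (l @ p @ r)) (ob_of (l @ q @ r))"
  unfolding whisker_def ob_of_append by (intro tensor_hom id_hom)

lemma whisker_comp:
  "hom C f a b \<Longrightarrow> hom C g b c \<Longrightarrow> Cmp C (whisker l r g) (whisker l r f) = whisker l r (Cmp C g f)"
  unfolding whisker_def
  by (simp add: interchange[OF id_hom id_hom tensor_hom[OF _ id_hom] tensor_hom[OF _ id_hom]]
      interchange[OF _ _ id_hom id_hom] comp_id_left[OF id_hom])

lemma whisker_id: "whisker l r (Id C (ob_of p)) = Id C (ob_of (l @ p @ r))"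
  by (simp add: whisker_def tensor_id ob_of_append)

lemma whisker_append:
  "Arr C f \<Longrightarrow> whisker (xs @ l) (r @ ys) f = whisker xs ys (whisker l r f)"
  unfolding whisker_def by (simp add: Id_ob_of_append tensor_assoc)

lemma whisker_Nil [simp]: "Arr C f \<Longrightarrow> whisker [] [] f = f"
  by (simp add: whisker_def)

lemma whisker_append_left: "Arr C f \<Longrightarrow> whisker (Y @ l) r f = TM C (Id C (ob_of Y)) (whisker l r f)"
  and whisker_append_right: "Arr C f \<Longrightarrow> whisker l (r @ Y) f = TM C (whisker l r f) (Id C (ob_of Y))"
  using whisker_append[of f Y l r "[]"] whisker_append[of f "[]" l r Y]
  by (simp_all add: whisker_def Arr_TM)

lemma layer_hom: "hom C (layer_arr x) (ob_of (layer_dom x)) (ob_of (layer_cod x))"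
  by (cases x) (simp add: whisker_hom gen_hom)

lemma layer_arr_whisker: "layer_arr (whisker_layer xs ys x) = whisker xs ys (layer_arr x)"
  by (cases x) (simp add: whisker_append hom_Arr[OF gen_hom])

lemma diagram_arr_Cons: "diagram_arr s (x # D) = Cmp C (diagram_arr (layer_cod x) D) (layer_arr x)"
  by (cases D) (simp_all add: comp_id_left[OF layer_hom])

lemma diagram_hom: "well_typed s D \<Longrightarrow> hom C (diagram_arr s D) (ob_of s) (ob_of (diagram_cod s D))"
  by (induction D arbitrary: s) (auto simp: diagram_arr_Cons id_hom intro: comp_hom layer_hom)

lemma diagram_arr_append:
  assumes "well_typed s D" "well_typed (diagram_cod s D) E"
  shows "diagram_arr s (D @ E) = Cmp C (diagram_arr (diagram_cod s D) E) (diagram_arr s D)"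
  using assms
proof (induction D arbitrary: s)
  case Nil
  then show ?case by (simp add: comp_id_right[OF diagram_hom])
next
  case (Cons x D)
  then have "layer_dom x = s" "well_typed (layer_cod x) D" by simp_all
  with Cons show ?case
    by (simp add: diagram_arr_Cons comp_assoc[OF layer_hom diagram_hom diagram_hom])
qed

lemma diagram_arr_whisker:
  "well_typed p L \<Longrightarrow> diagram_arr (xs @ p @ ys) (map (whisker_layer xs ys) L) = whisker xs ys (diagram_arr p L)"
proof (induction L arbitrary: p)
  case Nil
  then show ?case by (simp add: whisker_id)
next
  case (Cons x L)
  then show ?case
    by (simp add: diagram_arr_Cons layer_arr_whisker whisker_comp[OF layer_hom diagram_hom])
qed

lemma diagram_replace_segment:
  assumes D: "well_typed s (P @ X @ Q)"
    and Y: "well_typed (diagram_cod s P) Y" "diagram_cod (diagram_cod s P) Y = diagram_cod (diagram_cod s P) X"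
    and eq: "diagram_arr (diagram_cod s P) X = diagram_arr (diagram_cod s P) Y"
  shows "well_typed s (P @ Y @ Q) \<and> diagram_cod s (P @ Y @ Q) = diagram_cod s (P @ X @ Q) \<and>
    diagram_arr s (P @ X @ Q) = diagram_arr s (P @ Y @ Q)"
proof -
  from D have "well_typed s P" "well_typed (diagram_cod s P) X"
    "well_typed (diagram_cod (diagram_cod s P) X) Q"
    by (simp_all add: well_typed_append diagram_cod_append)
  then show ?thesis
    using Y eq by (simp add: well_typed_append diagram_cod_append diagram_arr_append)
qed

lemma rewrite_at_sound:
  assumes r: "valid_rule r" and D: "well_typed s D" and step: "rewrite_at r i D = Some D'"
  shows "well_typed s D' \<and> diagram_cod s D' = diagram_cod s D \<and> diagram_arr s D = diagram_arr s D'"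
proof -
  obtain p L R where r_eq: "r = (p, L, R)" by (cases r)
  obtain l g r' where x: "D ! i = (l, g, r')" by (cases "D ! i")
  obtain l0 g0 r0 where x0: "hd L = (l0, g0, r0)" by (cases "hd L")
  define xs where "xs = take (length l - length l0) l"
  define ys where "ys = drop (length r0) r'"
  define P where "P = take i D"
  define Q where "Q = drop (i + length L) D"
  have match: "L \<noteq> []" "take (length L) (drop i D) = map (whisker_layer xs ys) L"
    and D': "D' = P @ map (whisker_layer xs ys) R @ Q"
    using step unfolding r_eq by (auto simp: x x0 xs_def ys_def P_def Q_def Let_def split: if_splits)
  have valid: "well_typed p L" "well_typed p R" "diagram_cod p L = diagram_cod p R" "diagram_arr p L = diagram_arr p R"
    using r by (simp_all add: r_eq)
  have D_eq: "D = P @ map (whisker_layer xs ys) L @ Q"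
    using match(2) unfolding P_def Q_def by (metis append_take_drop_id drop_drop add.commute)
  have "diagram_cod s P = layer_dom (whisker_layer xs ys (hd L))"
    using D match(1) unfolding D_eq by (cases L) (simp_all add: well_typed_append)
  also have "\<dots> = xs @ p @ ys"
    using valid(1) match(1) by (cases L) simp_all
  finally have cod_P: "diagram_cod s P = xs @ p @ ys" .
  show ?thesis
    unfolding D_eq D'
    by (rule diagram_replace_segment)
      (use D well_typed_whisker[OF valid(1)] well_typed_whisker[OF valid(2)] in
        \<open>simp_all add: D_eq cod_P valid diagram_arr_whisker\<close>)
qed

lemma independent_boxes_commute:
  "Cmp C (layer_arr (l @ gen_cod g @ M, h, r)) (layer_arr (l, g, M @ gen_dom h @ r)) =
   Cmp C (layer_arr (l, g, M @ gen_cod h @ r)) (layer_arr (l @ gen_dom g @ M, h, r))"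
proof -
  define f where "f = gen_arr g"
  define k where "k = TM C (Id C (ob_of M)) (gen_arr h)"
  have f: "hom C f (ob_of (gen_dom g)) (ob_of (gen_cod g))"
    unfolding f_def by (rule gen_hom)
  have k: "hom C k (ob_of (M @ gen_dom h)) (ob_of (M @ gen_cod h))"
    unfolding k_def ob_of_append by (intro tensor_hom id_hom gen_hom)
  have whisker_f: "whisker l (M @ q @ r) (gen_arr g) = whisker l r (TM C f (Id C (ob_of (M @ q))))" for q
    using whisker_append[of f l "[]" "M @ q" r] hom_Arr[OF f]
    by (simp add: f_def whisker_Nil_left)
  have whisker_k: "whisker (l @ q @ M) r (gen_arr h) = whisker l r (TM C (Id C (ob_of q)) k)" for q
    using whisker_append[of "gen_arr h" l "q @ M" "[]" r] hom_Arr[OF gen_hom, of h]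
    by (simp add: k_def whisker_Nil_right Id_ob_of_append tensor_assoc)
  have "Cmp C (layer_arr (l @ gen_cod g @ M, h, r)) (layer_arr (l, g, M @ gen_dom h @ r)) =
      whisker l r (Cmp C (TM C (Id C (ob_of (gen_cod g))) k) (TM C f (Id C (ob_of (M @ gen_dom h)))))"
    by (simp add: whisker_f whisker_k whisker_comp[OF tensor_hom[OF f id_hom] tensor_hom[OF id_hom k]])
  also have "\<dots> = whisker l r (TM C f k)"
    using TM_eq_first_then_second[of f k] f k by (simp add: hom_def)
  also have "\<dots> = whisker l r (Cmp C (TM C f (Id C (ob_of (M @ gen_cod h)))) (TM C (Id C (ob_of (gen_dom g))) k))"
    using TM_eq_second_then_first[of f k] f k by (simp add: hom_def)
  also have "\<dots> = Cmp C (layer_arr (l, g, M @ gen_cod h @ r)) (layer_arr (l @ gen_dom g @ M, h, r))"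
    by (simp add: whisker_f whisker_k whisker_comp[OF tensor_hom[OF id_hom k] tensor_hom[OF f id_hom]])
  finally show ?thesis .
qed

lemma swap_pair_sound:
  assumes "swap_pair x y = Some (y', x')"
  shows "layer_dom y' = layer_dom x \<and> layer_dom x' = layer_cod y' \<and> layer_cod x' = layer_cod y \<and>
    Cmp C (layer_arr x') (layer_arr y') = Cmp C (layer_arr y) (layer_arr x)"
proof -
  obtain l1 g r1 l2 h r2 where xy: "x = (l1, g, r1)" "y = (l2, h, r2)"
    by (cases x, cases y) auto
  show ?thesis
  proof (cases "length l1 + length (gen_cod g) \<le> length l2")
    case True
    then obtain M where "l2 = l1 @ gen_cod g @ M" "r1 = M @ gen_dom h @ r2"
      "y' = (l1 @ gen_dom g @ M, h, r2)" "x' = (l1, g, M @ gen_cod h @ r2)"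
      using assms by (auto simp: xy Let_def split: if_splits)
    then show ?thesis
      using independent_boxes_commute[of l1 g M h r2] by (simp add: xy)
  next
    case False
    then obtain M where "l1 = l2 @ gen_dom h @ M" "r2 = M @ gen_cod g @ r1"
      "y' = (l2, h, M @ gen_dom g @ r1)" "x' = (l2 @ gen_cod h @ M, g, r1)"
      using assms by (auto simp: xy Let_def split: if_splits)
    then show ?thesis
      using independent_boxes_commute[of l2 h M g r1] by (simp add: xy)
  qed
qed

lemma swap_at_sound:
  assumes D: "well_typed s D" and step: "swap_at i D = Some D'"
  shows "well_typed s D' \<and> diagram_cod s D' = diagram_cod s D \<and> diagram_arr s D = diagram_arr s D'"
proof -
  have i: "Suc i < length D" using step by (simp add: swap_at_def split: if_splits)
  obtain y' x' where swap: "swap_pair (D ! i) (D ! Suc i) = Some (y', x')"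
    and D': "D' = take i D @ [y', x'] @ drop (Suc (Suc i)) D"
    using step i by (auto simp: swap_at_def split: option.splits)
  have D_eq: "D = take i D @ [D ! i, D ! Suc i] @ drop (Suc (Suc i)) D"
    using i by (metis Cons_nth_drop_Suc Suc_lessD append_Cons append_Nil append_take_drop_id)
  have "layer_dom (D ! i) = diagram_cod s (take i D)"
    using D by (subst (asm) D_eq) (simp add: well_typed_append)
  then show ?thesis
    unfolding D'
    by (subst (1 2) D_eq, intro diagram_replace_segment)
      (use D D_eq swap_pair_sound[OF swap] in \<open>simp_all\<close>)
qed

lemma apply_step_sound:
  assumes "valid_step st" "well_typed s D" "apply_step st D = Some D'"
  shows "well_typed s D' \<and> diagram_cod s D' = diagram_cod s D \<and> diagram_arr s D = diagram_arr s D'"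
proof (cases st)
  case (Swap i)
  with assms(3) have "swap_at i D = Some D'" by simp
  with assms(2) show ?thesis by (rule swap_at_sound)
next
  case (Fwd r i)
  with assms(1,3) have "valid_rule r" "rewrite_at r i D = Some D'" by simp_all
  with assms(2) show ?thesis using rewrite_at_sound[of r s D i D'] by blast
next
  case (Bwd r i)
  obtain p L R where r: "r = (p, L, R)" by (cases r)
  with Bwd assms(1,3) have "valid_rule (p, R, L)" "rewrite_at (p, R, L) i D = Some D'" by auto
  with assms(2) show ?thesis using rewrite_at_sound[of "(p, R, L)" s D i D'] by blast
qed

lemma run_steps_sound:
  "list_all valid_step sts \<Longrightarrow> well_typed s D \<Longrightarrow> run_steps sts D = Some D' \<Longrightarrow>
   well_typed s D' \<and> diagram_cod s D' = diagram_cod s D \<and> diagram_arr s D = diagram_arr s D'"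
proof (induction sts arbitrary: D)
  case Nil
  then show ?case by simp
next
  case (Cons st sts)
  then obtain E where E: "apply_step st D = Some E" and rest: "run_steps sts E = Some D'"
    by (cases "apply_step st D") auto
  from Cons.prems(1,2) E have "well_typed s E \<and> diagram_cod s E = diagram_cod s D \<and> diagram_arr s D = diagram_arr s E"
    using apply_step_sound[of st s D E] by simp
  with Cons.IH[OF _ _ rest] Cons.prems(1) show ?case by simp
qed

lemma diagram_arr_eq_by_steps:
  "list_all valid_step sts \<Longrightarrow> well_typed s D \<Longrightarrow> run_steps sts D = Some D' \<Longrightarrow>
   diagram_arr s D = diagram_arr s D'"
  using run_steps_sound by blast

lemma valid_rule_by_steps:
  "list_all valid_step sts \<Longrightarrow> well_typed s L \<Longrightarrow> run_steps sts L = Some R \<Longrightarrow> valid_rule (s, L, R)"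
  using run_steps_sound[of sts s L R] by simp

lemma valid_braid_natural_left [valid_rules]: "valid_rule (braid_natural_left l g r Y)"
proof -
  have f: "hom C (whisker l r (gen_arr g)) (ob_of (l @ gen_dom g @ r)) (ob_of (l @ gen_cod g @ r))"
    by (intro whisker_hom gen_hom)
  then show ?thesis
    using braid_natural[OF f id_hom[of "ob_of Y"]] hom_Arr[OF gen_hom, of g]
    by (simp add: braid_natural_left_def whisker_append_left whisker_append_right hom_Arr[OF f])
qed

lemma valid_braid_natural_right [valid_rules]: "valid_rule (braid_natural_right X l g r)"
proof -
  have f: "hom C (whisker l r (gen_arr g)) (ob_of (l @ gen_dom g @ r)) (ob_of (l @ gen_cod g @ r))"
    by (intro whisker_hom gen_hom)
  then show ?thesis
    using braid_natural[OF id_hom[of "ob_of X"] f] hom_Arr[OF gen_hom, of g]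
    by (simp add: braid_natural_right_def whisker_append_left whisker_append_right hom_Arr[OF f])
qed

lemma valid_braid_split_right [valid_rules]: "valid_rule (braid_split_right X Y1 Y2)"
  by (simp add: braid_split_right_def braid_tensor_right ob_of_append whisker_Nil_left whisker_Nil_right tensor_ob_assoc)

lemma valid_braid_split_left [valid_rules]: "valid_rule (braid_split_left X1 X2 Y)"
  by (simp add: braid_split_left_def braid_tensor_left ob_of_append whisker_Nil_left whisker_Nil_right tensor_ob_assoc)

lemma valid_braid_empty_right [valid_rules]: "valid_rule (braid_empty_right X)"
  by (simp add: braid_empty_right_def braid_unit_right)

lemma valid_braid_empty_left [valid_rules]: "valid_rule (braid_empty_left X)"
  by (simp add: braid_empty_left_def braid_unit_left)

end

section \<open>Braided groups and crossed modules as rewrite rules\<close>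

datatype wire = WA | WB

datatype box = MulA | UnitA | ComulA | CounitA | AntipodeA | ActB | CoactB | AntipodeB

fun box_dom :: "box \<Rightarrow> wire list" where
  "box_dom MulA = [WA, WA]"
| "box_dom UnitA = []"
| "box_dom ComulA = [WA]"
| "box_dom CounitA = [WA]"
| "box_dom AntipodeA = [WA]"
| "box_dom ActB = [WB, WA]"
| "box_dom CoactB = [WB]"
| "box_dom AntipodeB = [WB]"

fun box_cod :: "box \<Rightarrow> wire list" where
  "box_cod MulA = [WA]"
| "box_cod UnitA = [WA]"
| "box_cod ComulA = [WA, WA]"
| "box_cod CounitA = []"
| "box_cod AntipodeA = [WA]"
| "box_cod ActB = [WB]"
| "box_cod CoactB = [WB, WA]"
| "box_cod AntipodeB = [WB]"

definition mul_assoc :: "(wire, box) rule" where [rule_defs]: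
  "mul_assoc =
    ([WA, WA, WA],
     [([], Box MulA, [WA]), ([], Box MulA, [])],
     [([WA], Box MulA, []), ([], Box MulA, [])])"

definition mul_unit_left :: "(wire, box) rule" where [rule_defs]:
  "mul_unit_left =
    ([WA],
     [([], Box UnitA, [WA]), ([], Box MulA, [])],
     [])"

definition mul_unit_right :: "(wire, box) rule" where [rule_defs]:
  "mul_unit_right =
    ([WA],
     [([WA], Box UnitA, []), ([], Box MulA, [])],
     [])"

definition comul_coassoc :: "(wire, box) rule" where [rule_defs]:
  "comul_coassoc =
    ([WA],
     [([], Box ComulA, []), ([], Box ComulA, [WA])],
     [([], Box ComulA, []), ([WA], Box ComulA, [])])"

definition comul_counit_left :: "(wire, box) rule" where [rule_defs]:
  "comul_counit_left =
    ([WA],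
     [([], Box ComulA, []), ([], Box CounitA, [WA])],
     [])"

definition comul_counit_right :: "(wire, box) rule" where [rule_defs]:
  "comul_counit_right =
    ([WA],
     [([], Box ComulA, []), ([WA], Box CounitA, [])],
     [])"

definition bialgebra :: "(wire, box) rule" where [rule_defs]:
  "bialgebra =
    ([WA, WA],
     [([], Box MulA, []), ([], Box ComulA, [])],
     [([], Box ComulA, [WA]), ([WA, WA], Box ComulA, []), ([WA], Braid [WA] [WA], [WA]),
      ([], Box MulA, [WA, WA]), ([WA], Box MulA, [])])"

definition comul_unit :: "(wire, box) rule" where [rule_defs]:
  "comul_unit =
    ([],
     [([], Box UnitA, []), ([], Box ComulA, [])],
     [([], Box UnitA, []), ([WA], Box UnitA, [])])"

definition counit_mul :: "(wire, box) rule" where [rule_defs]: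
  "counit_mul =
    ([WA, WA],
     [([], Box MulA, []), ([], Box CounitA, [])],
     [([], Box CounitA, [WA]), ([], Box CounitA, [])])"

definition antipode_left :: "(wire, box) rule" where [rule_defs]:
  "antipode_left =
    ([WA],
     [([], Box ComulA, []), ([], Box AntipodeA, [WA]), ([], Box MulA, [])],
     [([], Box CounitA, []), ([], Box UnitA, [])])"

definition antipode_right :: "(wire, box) rule" where [rule_defs]:
  "antipode_right =
    ([WA],
     [([], Box ComulA, []), ([WA], Box AntipodeA, []), ([], Box MulA, [])],
     [([], Box CounitA, []), ([], Box UnitA, [])])"

definition act_assoc :: "(wire, box) rule" where [rule_defs]:
  "act_assoc =
    ([WB, WA, WA],
     [([], Box ActB, [WA]), ([], Box ActB, [])],
     [([WB], Box MulA, []), ([], Box ActB, [])])"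

definition coact_coassoc :: "(wire, box) rule" where [rule_defs]:
  "coact_coassoc =
    ([WB],
     [([], Box CoactB, []), ([], Box CoactB, [WA])],
     [([], Box CoactB, []), ([WB], Box ComulA, [])])"

definition crossed_module :: "(wire, box) rule" where [rule_defs]:
  "crossed_module =
    ([WB, WA],
     [([WB], Box ComulA, []), ([], Braid [WB] [WA], [WA]), ([WA], Box ActB, []),
      ([WA], Box CoactB, []), ([], Braid [WA] [WB], [WA]), ([WB], Box MulA, [])],
     [([], Box CoactB, [WA]), ([WB, WA], Box ComulA, []), ([WB], Braid [WA] [WA], [WA]),
      ([], Box ActB, [WA, WA]), ([WB], Box MulA, [])])"

definition antipodeB_act :: "(wire, box) rule" where [rule_defs]:
  "antipodeB_act =
    ([WB, WA],
     [([], Box ActB, []), ([], Box AntipodeB, [])],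
     [([], Box AntipodeB, [WA]), ([], Box ActB, [])])"

definition antipodeB_coact :: "(wire, box) rule" where [rule_defs]:
  "antipodeB_coact =
    ([WB],
     [([], Box AntipodeB, []), ([], Box CoactB, [])],
     [([], Box CoactB, []), ([], Box AntipodeB, [WA])])"

locale cross_product_setting = braided_strict_monoidal_cat C for C :: "('o, 'm) bmcat" +
  fixes A B :: 'o and muA etaA DeA epA SA act coact SB :: 'm
  assumes braided_group_A: "braided_group C A muA etaA DeA epA SA"
    and crossed_module_B: "yd_mod C A muA etaA DeA epA B act coact"
    and antipodeB_yd_hom: "yd_hom C A SB act coact act coact"
    and antipodeB_hom: "hom C SB B B"
begin

fun wire_ob :: "wire \<Rightarrow> 'o" where
  "wire_ob WA = A"
| "wire_ob WB = B"

fun box_arr :: "box \<Rightarrow> 'm" where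
  "box_arr MulA = muA"
| "box_arr UnitA = etaA"
| "box_arr ComulA = DeA"
| "box_arr CounitA = epA"
| "box_arr AntipodeA = SA"
| "box_arr ActB = act"
| "box_arr CoactB = coact"
| "box_arr AntipodeB = SB"

lemmas hopf_axioms = braided_group_A[unfolded braided_group_def hopf_ax_def]
lemmas crossed_module_axioms = crossed_module_B[unfolded yd_mod_def rmod_def rcomod_def]
lemmas antipodeB_axioms = antipodeB_yd_hom[unfolded yd_hom_def]

lemma structure_homs:
  "hom C muA (TO C A A) A" "hom C etaA (UnitO C) A" "hom C DeA A (TO C A A)" "hom C epA A (UnitO C)"
  "hom C SA A A" "hom C act (TO C B A) B" "hom C coact B (TO C B A)" "hom C SB B B"
  using hopf_axioms crossed_module_axioms antipodeB_hom by auto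

lemma Arr_structure [simp]:
  "Arr C muA" "Arr C etaA" "Arr C DeA" "Arr C epA" "Arr C SA" "Arr C act" "Arr C coact" "Arr C SB"
  using structure_homs by (simp_all add: hom_def)

lemma Dom_structure [simp]:
  "Dom C muA = TO C A A" "Dom C etaA = UnitO C" "Dom C DeA = A" "Dom C epA = A"
  "Dom C SA = A" "Dom C act = TO C B A" "Dom C coact = B" "Dom C SB = B"
  using structure_homs by (simp_all add: hom_def)

lemma Cod_structure [simp]:
  "Cod C muA = A" "Cod C etaA = A" "Cod C DeA = TO C A A" "Cod C epA = UnitO C"
  "Cod C SA = A" "Cod C act = B" "Cod C coact = TO C B A" "Cod C SB = B"
  using structure_homs by (simp_all add: hom_def)

sublocale wire_model C wire_ob ..

sublocale diagram_model C wire_ob box_dom box_cod box_arr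
proof
  fix b
  show "hom C (box_arr b) (ob_of (box_dom b)) (ob_of (box_cod b))"
    by (cases b) (simp_all add: ob_of_Cons structure_homs)
qed

lemmas composite_simps = whisker_def ob_of_Cons tensor_ob_assoc tensor_assoc Cmp_assoc_right TM_Id_Cmp TM_Cmp_Id

lemma valid_hopf_rules [valid_rules]:
  "valid_rule mul_assoc" "valid_rule mul_unit_left" "valid_rule mul_unit_right"
  "valid_rule comul_coassoc" "valid_rule comul_counit_left" "valid_rule comul_counit_right"
  "valid_rule antipode_left" "valid_rule antipode_right"
  using hopf_axioms by (simp_all add: rule_defs composite_simps)

lemma valid_bialgebra_rules [valid_rules]:
  "valid_rule bialgebra" "valid_rule comul_unit" "valid_rule counit_mul"
  using hopf_axioms
  by (simp_all add: rule_defs composite_simps TM_eq_first_then_second[of muA muA]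
      TM_eq_first_then_second[of DeA DeA] TM_eq_first_then_second[of etaA etaA] TM_eq_first_then_second[of epA epA])

lemma valid_crossed_module_rules [valid_rules]:
  "valid_rule act_assoc" "valid_rule coact_coassoc" "valid_rule crossed_module"
  "valid_rule antipodeB_act" "valid_rule antipodeB_coact"
  using crossed_module_axioms antipodeB_axioms
  by (simp_all add: rule_defs composite_simps TM_eq_first_then_second[of act muA] TM_eq_first_then_second[of coact DeA])

definition tensor_comul_coassoc :: "(wire, box) rule" where [rule_defs]:
  "tensor_comul_coassoc =
    ([WA, WA],
     [([], Box ComulA, [WA]), ([WA, WA], Box ComulA, []), ([WA], Braid [WA] [WA], [WA]),
      ([WA, WA], Box ComulA, [WA]), ([WA, WA, WA, WA], Box ComulA, []),
      ([WA, WA, WA], Braid [WA] [WA], [WA])],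
     [([], Box ComulA, [WA]), ([WA, WA], Box ComulA, []), ([WA], Braid [WA] [WA], [WA]),
      ([], Box ComulA, [WA, WA, WA]), ([WA, WA], Box ComulA, [WA, WA]),
      ([WA], Braid [WA] [WA], [WA, WA, WA])])"

lemma valid_tensor_comul_coassoc [valid_rules]: "valid_rule tensor_comul_coassoc"
proof -
  have "diagram_arr [WA, WA]
      [([], Box ComulA, [WA]), ([WA, WA], Box ComulA, []), ([WA], Braid [WA] [WA], [WA]),
       ([WA, WA], Box ComulA, [WA]), ([WA, WA, WA, WA], Box ComulA, []),
       ([WA, WA, WA], Braid [WA] [WA], [WA])] =
    diagram_arr [WA, WA]
      [([], Box ComulA, [WA]), ([WA], Box ComulA, [WA]), ([WA, WA, WA], Box ComulA, []),
       ([WA, WA, WA, WA], Box ComulA, []), ([WA, WA], Braid [WA] [WA], [WA, WA]),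
       ([WA], Braid [WA] [WA], [WA, WA, WA]), ([WA, WA, WA], Braid [WA] [WA], [WA])]"
    by (rule diagram_arr_eq_by_steps[where sts = "[Bwd (braid_natural_left [] (Box ComulA) [] [WA]) 2,
        Fwd (braid_split_left [WA] [WA] [WA]) 3, Swap 4, Swap 3, Swap 2, Swap 2, Swap 1]"])
      (simp add: valid_rules, simp_all add: rule_defs swap_at_def Let_def)
  also have "\<dots> = diagram_arr [WA, WA]
      [([], Box ComulA, [WA]), ([WA, WA], Box ComulA, []), ([WA], Braid [WA] [WA], [WA]),
       ([], Box ComulA, [WA, WA, WA]), ([WA, WA], Box ComulA, [WA, WA]),
       ([WA], Braid [WA] [WA], [WA, WA, WA])]"
    by (rule diagram_arr_eq_by_steps[where sts = "[Swap 2, Swap 1, Fwd comul_coassoc 0,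
        Bwd (braid_natural_right [WA] [] (Box ComulA) []) 3,
        Fwd (braid_split_right [WA] [WA] [WA]) 4, Fwd comul_coassoc 2, Swap 5]", THEN sym])
      (simp add: valid_rules, simp_all add: rule_defs swap_at_def Let_def)
  finally show ?thesis
    by (simp add: tensor_comul_coassoc_def del: diagram_arr.simps)
qed

text \<open>For the convolution product, \<open>S \<circ> \<mu>\<close> and \<open>\<mu> \<circ> \<Psi> \<circ> (S \<otimes> S)\<close> are a left and a right
  inverse of \<open>\<mu>\<close>, and \<open>(S \<otimes> S) \<circ> \<Psi> \<circ> \<Delta>\<close> and \<open>\<Delta> \<circ> S\<close> are a left and a right inverse of
  \<open>\<Delta>\<close>; the two inverses agree in each case, which gives \<open>antipode_mul\<close> and \<open>comul_antipode\<close>.\<close>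

definition mul_right_conv_inverse :: "(wire, box) rule" where [rule_defs]:
  "mul_right_conv_inverse =
    ([WA, WA],
     [([], Box ComulA, [WA]), ([WA, WA], Box ComulA, []), ([WA], Braid [WA] [WA], [WA]),
      ([], Box MulA, [WA, WA]), ([WA], Box AntipodeA, [WA]), ([WA, WA], Box AntipodeA, []),
      ([WA], Braid [WA] [WA], []), ([WA], Box MulA, []), ([], Box MulA, [])],
     [([WA], Box CounitA, []), ([], Box CounitA, []), ([], Box UnitA, [])])"

lemma valid_mul_right_conv_inverse [valid_rules]: "valid_rule mul_right_conv_inverse"
  unfolding mul_right_conv_inverse_def
  by (rule valid_rule_by_steps[where sts = "[Swap 3,
        Bwd (braid_natural_left [] (Box AntipodeA) [] [WA]) 2, Swap 4, Swap 3, Swap 5,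
        Bwd (braid_split_right [WA] [WA] [WA]) 4, Swap 5, Fwd mul_assoc 6, Bwd mul_assoc 5,
        Bwd (braid_natural_right [WA] [] (Box MulA) []) 4, Swap 1, Fwd antipode_right 2,
        Fwd (braid_natural_right [WA] [] (Box UnitA) []) 3, Fwd (braid_empty_right [WA]) 3,
        Fwd mul_unit_left 3, Swap 1, Swap 0, Fwd antipode_right 1]"])
    (simp add: valid_rules, simp_all add: rule_defs swap_at_def Let_def)

definition mul_left_conv_inverse :: "(wire, box) rule" where [rule_defs]:
  "mul_left_conv_inverse =
    ([WA, WA],
     [([], Box ComulA, [WA]), ([WA, WA], Box ComulA, []), ([WA], Braid [WA] [WA], [WA]),
      ([], Box MulA, [WA, WA]), ([], Box AntipodeA, [WA, WA]), ([WA], Box MulA, []),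
      ([], Box MulA, [])],
     [([WA], Box CounitA, []), ([], Box CounitA, []), ([], Box UnitA, [])])"

lemma valid_mul_left_conv_inverse [valid_rules]: "valid_rule mul_left_conv_inverse"
  unfolding mul_left_conv_inverse_def
  by (rule valid_rule_by_steps[where sts = "[Swap 4, Bwd bialgebra 0, Fwd antipode_left 1,
        Fwd counit_mul 0, Swap 0]"])
    (simp add: valid_rules, simp_all add: rule_defs swap_at_def Let_def)

definition antipode_mul :: "(wire, box) rule" where [rule_defs]:
  "antipode_mul =
    ([WA, WA],
     [([], Box MulA, []), ([], Box AntipodeA, [])],
     [([], Box AntipodeA, [WA]), ([WA], Box AntipodeA, []), ([], Braid [WA] [WA], []),
      ([], Box MulA, [])])"

lemma valid_antipode_mul [valid_rules]: "valid_rule antipode_mul"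
proof -
  have "diagram_arr [WA, WA]
      [([], Box MulA, []), ([], Box AntipodeA, [])] =
    diagram_arr [WA, WA]
      [([], Box ComulA, [WA]), ([WA, WA], Box ComulA, []), ([WA], Braid [WA] [WA], [WA]),
       ([WA, WA], Box ComulA, [WA]), ([WA, WA, WA, WA], Box ComulA, []),
       ([WA, WA, WA], Braid [WA] [WA], [WA]), ([], Box MulA, [WA, WA, WA, WA]),
       ([], Box AntipodeA, [WA, WA, WA, WA]), ([WA], Box MulA, [WA, WA]),
       ([WA, WA], Box AntipodeA, [WA]), ([WA, WA, WA], Box AntipodeA, []),
       ([WA, WA], Braid [WA] [WA], []), ([WA, WA], Box MulA, []), ([WA], Box MulA, []),
       ([], Box MulA, [])]"
    by (rule diagram_arr_eq_by_steps[where sts = "[Swap 7, Swap 8, Swap 9, Swap 10, Swap 11,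
        Swap 12, Swap 6, Swap 7, Swap 8, Swap 9, Swap 10, Swap 11, Fwd mul_right_conv_inverse 3,
        Swap 5, Swap 6, Fwd mul_unit_right 7, Swap 2, Fwd comul_counit_right 1,
        Bwd (braid_natural_left [] (Box CounitA) [] [WA]) 1, Fwd (braid_empty_left [WA]) 2,
        Fwd comul_counit_right 0]", THEN sym])
      (simp add: valid_rules, simp_all add: rule_defs swap_at_def Let_def)
  also have "\<dots> = diagram_arr [WA, WA]
      [([], Box AntipodeA, [WA]), ([WA], Box AntipodeA, []), ([], Braid [WA] [WA], []),
       ([], Box MulA, [])]"
    by (rule diagram_arr_eq_by_steps[where sts = "[Fwd tensor_comul_coassoc 0, Bwd mul_assoc 13,
        Swap 12, Swap 11, Swap 10, Swap 9, Fwd mul_left_conv_inverse 3, Swap 5, Swap 6, Swap 7,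
        Swap 8, Fwd mul_unit_left 9, Bwd (braid_natural_right [WA] [] (Box CounitA) []) 2,
        Fwd (braid_empty_right [WA]) 3, Fwd comul_counit_left 1, Fwd comul_counit_left 0]"])
      (simp add: valid_rules, simp_all add: rule_defs swap_at_def Let_def)
  finally show ?thesis
    by (simp add: antipode_mul_def del: diagram_arr.simps)
qed

definition tensor_mul_assoc :: "(wire, box) rule" where [rule_defs]:
  "tensor_mul_assoc =
    ([WA, WA, WA, WA, WA, WA],
     [([WA], Braid [WA] [WA], [WA, WA, WA]), ([], Box MulA, [WA, WA, WA, WA]),
      ([WA], Box MulA, [WA, WA]), ([WA], Braid [WA] [WA], [WA]), ([], Box MulA, [WA, WA]),
      ([WA], Box MulA, [])],
     [([WA, WA, WA], Braid [WA] [WA], [WA]), ([WA, WA], Box MulA, [WA, WA]),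
      ([WA, WA, WA], Box MulA, []), ([WA], Braid [WA] [WA], [WA]), ([], Box MulA, [WA, WA]),
      ([WA], Box MulA, [])])"

lemma valid_tensor_mul_assoc [valid_rules]: "valid_rule tensor_mul_assoc"
proof -
  have "diagram_arr [WA, WA, WA, WA, WA, WA]
      [([WA], Braid [WA] [WA], [WA, WA, WA]), ([], Box MulA, [WA, WA, WA, WA]),
       ([WA], Box MulA, [WA, WA]), ([WA], Braid [WA] [WA], [WA]), ([], Box MulA, [WA, WA]),
       ([WA], Box MulA, [])] =
    diagram_arr [WA, WA, WA, WA, WA, WA]
      [([WA], Braid [WA] [WA], [WA, WA, WA]), ([WA, WA, WA], Braid [WA] [WA], [WA]),
       ([WA, WA], Braid [WA] [WA], [WA, WA]), ([WA, WA, WA, WA], Box MulA, []),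
       ([WA], Box MulA, [WA, WA]), ([], Box MulA, [WA, WA]), ([WA], Box MulA, [])]"
    by (rule diagram_arr_eq_by_steps[where sts = "[Fwd (braid_natural_left [] (Box MulA) [] [WA]) 2,
        Fwd (braid_split_left [WA] [WA] [WA]) 2, Swap 1, Swap 2, Swap 4, Fwd mul_assoc 3,
        Fwd mul_assoc 5, Swap 4, Swap 3]"])
      (simp add: valid_rules, simp_all add: rule_defs swap_at_def Let_def)
  also have "\<dots> = diagram_arr [WA, WA, WA, WA, WA, WA]
      [([WA, WA, WA], Braid [WA] [WA], [WA]), ([WA, WA], Box MulA, [WA, WA]),
       ([WA, WA, WA], Box MulA, []), ([WA], Braid [WA] [WA], [WA]), ([], Box MulA, [WA, WA]),
       ([WA], Box MulA, [])]"
    by (rule diagram_arr_eq_by_steps[where sts = "[Swap 1,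
        Fwd (braid_natural_right [WA] [] (Box MulA) []) 2, Swap 1,
        Fwd (braid_split_right [WA] [WA] [WA]) 1, Swap 0]", THEN sym])
      (simp add: valid_rules, simp_all add: rule_defs swap_at_def Let_def)
  finally show ?thesis
    by (simp add: tensor_mul_assoc_def del: diagram_arr.simps)
qed

definition comul_left_conv_inverse :: "(wire, box) rule" where [rule_defs]:
  "comul_left_conv_inverse =
    ([WA],
     [([], Box ComulA, []), ([], Box ComulA, [WA]), ([], Braid [WA] [WA], [WA]),
      ([], Box AntipodeA, [WA, WA]), ([WA], Box AntipodeA, [WA]), ([WA, WA], Box ComulA, []),
      ([WA], Braid [WA] [WA], [WA]), ([], Box MulA, [WA, WA]), ([WA], Box MulA, [])],
     [([], Box CounitA, []), ([], Box UnitA, []), ([WA], Box UnitA, [])])"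

lemma valid_comul_left_conv_inverse [valid_rules]: "valid_rule comul_left_conv_inverse"
  unfolding comul_left_conv_inverse_def
  by (rule valid_rule_by_steps[where sts = "[Swap 4, Swap 3,
        Fwd (braid_natural_left [] (Box AntipodeA) [] [WA]) 5, Swap 4, Swap 2,
        Bwd (braid_split_right [WA] [WA] [WA]) 3, Swap 1, Bwd comul_coassoc 0, Fwd comul_coassoc 1,
        Fwd (braid_natural_right [WA] [] (Box ComulA) []) 2, Swap 4, Swap 3, Fwd antipode_left 4,
        Swap 3, Bwd (braid_natural_right [WA] [] (Box CounitA) []) 2,
        Fwd (braid_empty_right [WA]) 3, Fwd comul_counit_right 1, Swap 2, Fwd antipode_left 0,
        Swap 1]"])
    (simp add: valid_rules, simp_all add: rule_defs swap_at_def Let_def)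

definition comul_right_conv_inverse :: "(wire, box) rule" where [rule_defs]:
  "comul_right_conv_inverse =
    ([WA],
     [([], Box ComulA, []), ([WA], Box AntipodeA, []), ([], Box ComulA, [WA]),
      ([WA, WA], Box ComulA, []), ([WA], Braid [WA] [WA], [WA]), ([], Box MulA, [WA, WA]),
      ([WA], Box MulA, [])],
     [([], Box CounitA, []), ([], Box UnitA, []), ([WA], Box UnitA, [])])"

lemma valid_comul_right_conv_inverse [valid_rules]: "valid_rule comul_right_conv_inverse"
  unfolding comul_right_conv_inverse_def
  by (rule valid_rule_by_steps[where sts = "[Bwd bialgebra 2, Fwd antipode_right 0, Fwd comul_unit 1]"])
    (simp add: valid_rules, simp_all add: rule_defs swap_at_def Let_def)

definition comul_antipode :: "(wire, box) rule" where [rule_defs]: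
  "comul_antipode =
    ([WA],
     [([], Box AntipodeA, []), ([], Box ComulA, [])],
     [([], Box ComulA, []), ([], Braid [WA] [WA], []), ([], Box AntipodeA, [WA]),
      ([WA], Box AntipodeA, [])])"

lemma valid_comul_antipode [valid_rules]: "valid_rule comul_antipode"
proof -
  have "diagram_arr [WA]
      [([], Box AntipodeA, []), ([], Box ComulA, [])] =
    diagram_arr [WA]
      [([], Box ComulA, []), ([], Box ComulA, [WA]), ([], Box ComulA, [WA, WA]),
       ([], Braid [WA] [WA], [WA, WA]), ([], Box AntipodeA, [WA, WA, WA]),
       ([WA], Box AntipodeA, [WA, WA]), ([WA, WA], Box ComulA, [WA]),
       ([WA], Braid [WA] [WA], [WA, WA]), ([], Box MulA, [WA, WA, WA]), ([WA], Box MulA, [WA]),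
       ([WA, WA], Box AntipodeA, []), ([WA, WA], Box ComulA, []), ([WA], Braid [WA] [WA], [WA]),
       ([], Box MulA, [WA, WA]), ([WA], Box MulA, [])]"
    by (rule diagram_arr_eq_by_steps[where sts = "[Fwd comul_left_conv_inverse 1, Swap 3, Swap 4,
        Fwd (braid_natural_left [] (Box UnitA) [] [WA]) 5, Fwd (braid_empty_left [WA]) 5, Swap 2,
        Swap 3, Swap 4, Fwd mul_unit_left 5, Fwd mul_unit_left 4, Fwd comul_counit_left 0]", THEN sym])
      (simp add: valid_rules, simp_all add: rule_defs swap_at_def Let_def)
  also have "\<dots> = diagram_arr [WA]
      [([], Box ComulA, []), ([WA], Box ComulA, []), ([], Box ComulA, [WA, WA]),
       ([], Braid [WA] [WA], [WA, WA]), ([], Box AntipodeA, [WA, WA, WA]),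
       ([WA], Box AntipodeA, [WA, WA]), ([WA, WA, WA], Box AntipodeA, []),
       ([WA, WA], Box ComulA, [WA]), ([WA, WA, WA, WA], Box ComulA, []),
       ([WA, WA, WA], Braid [WA] [WA], [WA]), ([WA, WA], Box MulA, [WA, WA]),
       ([WA, WA, WA], Box MulA, []), ([WA], Braid [WA] [WA], [WA]), ([], Box MulA, [WA, WA]),
       ([WA], Box MulA, [])]"
    by (rule diagram_arr_eq_by_steps[where sts = "[Fwd comul_coassoc 0, Swap 9, Swap 8, Swap 7,
        Swap 10, Swap 9, Swap 8, Fwd tensor_mul_assoc 9, Swap 6]"])
      (simp add: valid_rules, simp_all add: rule_defs swap_at_def Let_def)
  also have "\<dots> = diagram_arr [WA]
      [([], Box ComulA, []), ([], Box ComulA, [WA]), ([], Braid [WA] [WA], [WA]),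
       ([], Box AntipodeA, [WA, WA]), ([WA], Box AntipodeA, [WA]), ([WA, WA], Box ComulA, []),
       ([WA, WA, WA], Box AntipodeA, []), ([WA, WA], Box ComulA, [WA]),
       ([WA, WA, WA, WA], Box ComulA, []), ([WA, WA, WA], Braid [WA] [WA], [WA]),
       ([WA, WA], Box MulA, [WA, WA]), ([WA, WA, WA], Box MulA, []), ([WA], Braid [WA] [WA], [WA]),
       ([], Box MulA, [WA, WA]), ([WA], Box MulA, [])]"
    by (rule diagram_arr_eq_by_steps[where sts = "[Swap 4, Swap 3, Swap 2, Swap 1]", THEN sym])
      (simp add: valid_rules, simp_all add: rule_defs swap_at_def Let_def)
  also have "\<dots> = diagram_arr [WA]
      [([], Box ComulA, []), ([], Braid [WA] [WA], []), ([], Box AntipodeA, [WA]),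
       ([WA], Box AntipodeA, [])]"
    by (rule diagram_arr_eq_by_steps[where sts = "[Fwd comul_right_conv_inverse 5, Swap 6,
        Fwd (braid_natural_right [WA] [] (Box UnitA) []) 7, Fwd (braid_empty_right [WA]) 7,
        Fwd mul_unit_right 7, Fwd mul_unit_right 6, Swap 4, Swap 3, Swap 2, Swap 1,
        Fwd comul_counit_right 0]"])
      (simp add: valid_rules, simp_all add: rule_defs swap_at_def Let_def)
  finally show ?thesis
    by (simp add: comul_antipode_def del: diagram_arr.simps)
qed

text \<open>\<open>\<theta> \<circ> (A \<otimes> S) \<circ> \<theta> = \<Psi> \<circ> (S \<otimes> S) \<circ> (A \<otimes> \<mu>) \<circ> (\<Delta> \<otimes> A)\<close> for
  \<open>\<theta> = (A \<otimes> \<mu>) \<circ> (\<Psi> \<otimes> A) \<circ> (A \<otimes> \<Delta>)\<close>: this is what happens to the \<open>A\<close>-wires when the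
  cross product antipode is applied twice.\<close>

definition twist_antipode_twist :: "(wire, box) rule" where [rule_defs]:
  "twist_antipode_twist =
    ([WA, WA],
     [([WA], Box ComulA, []), ([], Braid [WA] [WA], [WA]), ([WA], Box MulA, []),
      ([WA], Box AntipodeA, []), ([WA], Box ComulA, []), ([], Braid [WA] [WA], [WA]),
      ([WA], Box MulA, [])],
     [([], Box ComulA, [WA]), ([WA], Box MulA, []), ([], Box AntipodeA, [WA]),
      ([WA], Box AntipodeA, []), ([], Braid [WA] [WA], [])])"


lemma valid_twist_antipode_twist [valid_rules]: "valid_rule twist_antipode_twist"
  unfolding twist_antipode_twist_def
  by (rule valid_rule_by_steps[where sts = "[Fwd comul_antipode 3, Fwd bialgebra 2, Swap 8,
        Bwd (braid_natural_left [] (Box AntipodeA) [] [WA]) 7, Swap 5, Fwd antipode_mul 6,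
        Bwd (braid_natural_right [WA] [] (Box AntipodeA) []) 10,
        Bwd (braid_split_left [WA] [WA] [WA]) 11, Bwd (braid_natural_left [] (Box MulA) [] [WA]) 11,
        Swap 9, Bwd mul_assoc 10, Fwd (braid_natural_right [WA] [] (Box AntipodeA) []) 7,
        Fwd (braid_natural_left [] (Box AntipodeA) [] [WA]) 6, Swap 5,
        Bwd (braid_split_left [WA] [WA] [WA]) 4, Swap 2,
        Fwd (braid_natural_left [] (Box ComulA) [] [WA]) 3, Swap 1,
        Bwd (braid_split_right [WA] [WA] [WA]) 2, Bwd comul_coassoc 0,
        Fwd (braid_natural_right [WA] [] (Box ComulA) []) 1, Swap 5, Swap 4, Swap 3, Swap 7, Swap 6,
        Swap 5, Swap 4, Fwd antipode_right 2, Bwd (braid_natural_right [WA] [] (Box CounitA) []) 1,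
        Fwd (braid_empty_right [WA]) 2, Fwd comul_counit_left 0, Swap 0, Swap 1, Swap 2, Swap 3,
        Fwd mul_unit_left 4]"])
    (simp add: valid_rules, simp_all add: rule_defs swap_at_def Let_def)

section \<open>The square of the cross product antipode\<close>

definition cross_antipode_diagram :: "(wire, box) diagram" where
  "cross_antipode_diagram =
    [([WA], Box CoactB, []), ([], Braid [WA] [WB], [WA]), ([WB], Box MulA, []),
     ([WB], Box AntipodeA, []), ([WB], Box ComulA, []), ([], Box AntipodeB, [WA, WA]),
     ([], Braid [WB] [WA], [WA]), ([WA], Box ActB, [])]"

definition antipode_square_diagram :: "(wire, box) diagram" where
  "antipode_square_diagram =
    [([WA], Box CoactB, []), ([WA, WB], Box AntipodeA, []), ([WA], Box ActB, []),
     ([], Braid [WA] [WB], []), ([], Braid [WB] [WA], []), ([], Box AntipodeA, [WB]),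
     ([], Box AntipodeA, [WB]), ([WA], Box AntipodeB, []), ([WA], Box AntipodeB, [])]"

lemma cross_antipode_eq_diagram:
  "cross_antipode C A muA DeA SA B act coact SB = diagram_arr [WA, WB] cross_antipode_diagram"
  unfolding cross_antipode_def cross_antipode_diagram_def
  by (simp add: composite_simps TM_eq_second_then_first[of SB "Cmp C DeA (Cmp C SA muA)"])

lemma antipode_square_eq_diagram:
  "Cmp C (TM C (Cmp C SA SA) (Cmp C SB SB))
     (Cmp C (Br C B A) (Cmp C (Br C A B) (TM C (Id C A) (sigma_BA C SA B act coact)))) =
   diagram_arr [WA, WB] antipode_square_diagram"
  unfolding sigma_BA_def antipode_square_diagram_def
  by (simp add: composite_simps TM_eq_first_then_second[of "Cmp C SA SA" "Cmp C SB SB"] tensor_id[symmetric])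

lemma cross_antipode_square_diagram:
  "diagram_arr [WA, WB] (cross_antipode_diagram @ cross_antipode_diagram) =
   diagram_arr [WA, WB] antipode_square_diagram"
proof -
  \<comment> \<open>the crossed-module condition lets the second coaction pass the first action\<close>
  have "diagram_arr [WA, WB] (cross_antipode_diagram @ cross_antipode_diagram) =
    diagram_arr [WA, WB]
      [([WA], Box CoactB, []), ([], Braid [WA] [WB], [WA]), ([WB], Box MulA, []),
       ([WB], Box AntipodeA, []), ([], Box CoactB, [WA]), ([], Box AntipodeB, [WA, WA]),
       ([], Box AntipodeB, [WA, WA]), ([WB, WA], Box ComulA, []), ([WB], Braid [WA] [WA], [WA]),
       ([WB, WA], Box MulA, []), ([WB, WA], Box AntipodeA, []), ([WB, WA], Box ComulA, []),
       ([], Box ActB, [WA, WA]), ([], Braid [WB] [WA], [WA]), ([WA], Box ActB, [])]"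
    by (rule diagram_arr_eq_by_steps[where sts = "[Swap 4, Fwd crossed_module 5, Swap 11, Swap 10,
        Swap 9, Fwd antipodeB_act 8, Swap 7, Swap 6, Fwd antipodeB_coact 4, Swap 9, Swap 10, Swap 11]"])
      (simp add: valid_rules, simp_all add: rule_defs swap_at_def Let_def cross_antipode_diagram_def)
  \<comment> \<open>the two actions merge, and the \<open>A\<close>-wires simplify by \<open>twist_antipode_twist\<close> and \<open>antipode_mul\<close>\<close>
  also have "\<dots> = diagram_arr [WA, WB]
      [([WA], Box CoactB, []), ([], Braid [WA] [WB], [WA]), ([WB], Box AntipodeA, [WA]),
       ([WB, WA], Box AntipodeA, []), ([], Box CoactB, [WA, WA]), ([WB, WA], Braid [WA] [WA], []),
       ([], Box AntipodeB, [WA, WA, WA]), ([], Box AntipodeB, [WA, WA, WA]),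
       ([WB], Box ComulA, [WA, WA]), ([WB, WA], Box MulA, [WA]), ([WB, WA], Box MulA, []),
       ([WB], Box AntipodeA, [WA]), ([WB, WA], Box AntipodeA, []), ([WB], Braid [WA] [WA], []),
       ([], Braid [WB] [WA], [WA]), ([WA], Box ActB, [])]"
    by (rule diagram_arr_eq_by_steps[where sts = "[Fwd (braid_natural_left [] (Box ActB) [] [WA]) 12,
        Fwd (braid_split_left [WB] [WA] [WA]) 12, Fwd act_assoc 14, Swap 13,
        Fwd twist_antipode_twist 7, Fwd antipode_mul 2, Swap 5, Swap 6, Swap 7, Swap 8,
        Bwd mul_assoc 9, Swap 4]"])
      (simp add: valid_rules, simp_all add: rule_defs swap_at_def Let_def)
  \<comment> \<open>the two coactions merge by coassociativity\<close>
  also have "\<dots> = diagram_arr [WA, WB]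
      [([WA], Box CoactB, []), ([WA, WB], Box ComulA, []), ([WA], Box AntipodeB, [WA, WA]),
       ([], Braid [WA] [WB, WA, WA], []), ([], Box AntipodeB, [WA, WA, WA]),
       ([WB, WA, WA], Box AntipodeA, []), ([WB, WA], Box AntipodeA, [WA]),
       ([WB], Box ComulA, [WA, WA]), ([WB, WA], Box MulA, [WA]), ([WB, WA], Box MulA, []),
       ([WB], Box AntipodeA, [WA]), ([WB, WA], Box AntipodeA, []), ([WB], Braid [WA] [WA], []),
       ([], Braid [WB] [WA], [WA]), ([WA], Box ActB, [])]"
    by (rule diagram_arr_eq_by_steps[where sts = "[Swap 3, Swap 2,
        Bwd (braid_natural_right [WA] [] (Box CoactB) []) 1, Fwd coact_coassoc 0,
        Fwd (braid_natural_right [WA] [] (Box AntipodeA) []) 4,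
        Fwd (braid_natural_left [] (Box AntipodeA) [] [WA]) 3,
        Bwd (braid_split_right [WA] [WB, WA] [WA]) 2, Swap 4, Swap 3, Swap 5, Swap 4,
        Bwd (braid_natural_right [WA] [] (Box AntipodeB) [WA, WA]) 2]"])
      (simp add: valid_rules, simp_all add: rule_defs swap_at_def Let_def)
  also have "\<dots> = diagram_arr [WA, WB]
      [([WA], Box CoactB, []), ([WA, WB], Box ComulA, []), ([WA, WB, WA], Box ComulA, []),
       ([WA], Box AntipodeB, [WA, WA, WA]), ([WA, WB, WA, WA], Box AntipodeA, []),
       ([WA], Box AntipodeB, [WA, WA, WA]), ([WA, WB, WA], Box MulA, []),
       ([], Braid [WA] [WB, WA, WA], []), ([WB, WA, WA], Box AntipodeA, []),
       ([WB, WA], Box MulA, []), ([WB], Box AntipodeA, [WA]), ([WB, WA], Box AntipodeA, []),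
       ([WB], Braid [WA] [WA], []), ([], Braid [WB] [WA], [WA]), ([WA], Box ActB, [])]"
    by (rule diagram_arr_eq_by_steps[where sts = "[Bwd (braid_natural_right [WA] [] (Box AntipodeB) [WA, WA]) 3,
        Swap 6, Swap 5, Bwd (braid_natural_right [WA] [WB] (Box ComulA) [WA]) 4, Swap 3, Swap 2,
        Fwd comul_coassoc 1, Swap 6, Swap 7,
        Bwd (braid_natural_right [WA] [WB, WA, WA] (Box AntipodeA) []) 5,
        Bwd (braid_natural_right [WA] [WB, WA] (Box MulA) []) 6, Swap 4]"])
      (simp add: valid_rules, simp_all add: rule_defs swap_at_def Let_def)
  \<comment> \<open>the antipode axiom, then the counit and unit laws, cancel the remaining factors of \<open>A\<close>\<close>
  also have "\<dots> = diagram_arr [WA, WB]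
      [([WA], Box CoactB, []), ([WA], Box AntipodeB, [WA]), ([WA], Box AntipodeB, [WA]),
       ([WA, WB], Box AntipodeA, []), ([], Braid [WA] [WB, WA], []), ([WB, WA], Box AntipodeA, []),
       ([WB, WA], Box AntipodeA, []), ([WB], Braid [WA] [WA], []), ([], Braid [WB] [WA], [WA]),
       ([WA], Box ActB, [])]"
    by (rule diagram_arr_eq_by_steps[where sts = "[Swap 3, Swap 5, Swap 4, Fwd antipode_right 2,
        Fwd comul_counit_right 1, Swap 1, Swap 2,
        Fwd (braid_natural_right [WA] [WB, WA] (Box UnitA) []) 3, Swap 4, Fwd mul_unit_left 5,
        Swap 4, Bwd (braid_natural_right [WA] [WB] (Box AntipodeA) []) 3]"])
      (simp add: valid_rules, simp_all add: rule_defs swap_at_def Let_def)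
  also have "\<dots> = diagram_arr [WA, WB]
      [([WA], Box CoactB, []), ([WA, WB], Box AntipodeA, []), ([WA], Box AntipodeB, [WA]),
       ([WA], Box ActB, []), ([WA], Box AntipodeB, []), ([], Braid [WA] [WB], []),
       ([], Braid [WB] [WA], []), ([], Box AntipodeA, [WB]), ([], Box AntipodeA, [WB])]"
    by (rule diagram_arr_eq_by_steps[where sts = "[Fwd (braid_natural_right [WA] [] (Box AntipodeA) []) 6,
        Fwd (braid_natural_right [WA] [] (Box AntipodeA) []) 5,
        Fwd (braid_natural_right [WB] [] (Box AntipodeA) []) 7,
        Fwd (braid_natural_right [WB] [] (Box AntipodeA) []) 6,
        Bwd (braid_split_left [WB] [WA] [WA]) 5, Swap 7, Swap 6,
        Bwd (braid_natural_left [] (Box ActB) [] [WA]) 5,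
        Bwd (braid_natural_right [WA] [] (Box ActB) []) 4, Swap 2, Swap 1, Bwd antipodeB_act 3]"])
      (simp add: valid_rules, simp_all add: rule_defs swap_at_def Let_def)
  also have "\<dots> = diagram_arr [WA, WB] antipode_square_diagram"
    by (rule diagram_arr_eq_by_steps[where sts = "[Bwd antipodeB_act 2,
        Fwd (braid_natural_right [WA] [] (Box AntipodeB) []) 4,
        Fwd (braid_natural_left [] (Box AntipodeB) [] [WA]) 5,
        Fwd (braid_natural_right [WA] [] (Box AntipodeB) []) 3,
        Fwd (braid_natural_left [] (Box AntipodeB) [] [WA]) 4, Swap 6, Swap 7, Swap 5, Swap 6]"])
      (simp add: valid_rules, simp_all add: rule_defs swap_at_def Let_def antipode_square_diagram_def)
  finally show ?thesis .
qed

lemma cross_antipode_square: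
  "Cmp C (cross_antipode C A muA DeA SA B act coact SB) (cross_antipode C A muA DeA SA B act coact SB) =
   Cmp C (TM C (Cmp C SA SA) (Cmp C SB SB))
     (Cmp C (Br C B A) (Cmp C (Br C A B) (TM C (Id C A) (sigma_BA C SA B act coact))))"
proof -
  have typed: "well_typed [WA, WB] cross_antipode_diagram"
    "diagram_cod [WA, WB] cross_antipode_diagram = [WA, WB]"
    by (simp_all add: cross_antipode_diagram_def)
  have "Cmp C (diagram_arr [WA, WB] cross_antipode_diagram) (diagram_arr [WA, WB] cross_antipode_diagram) =
      diagram_arr [WA, WB] (cross_antipode_diagram @ cross_antipode_diagram)"
    using diagram_arr_append[OF typed(1)] typed by simp
  then show ?thesis
    by (simp only: cross_antipode_eq_diagram antipode_square_eq_diagram cross_antipode_square_diagram)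
qed

end

theorem mainTheorem15:
  fixes C :: "('o, 'm) bmcat"
  assumes "braided_strict_monoidal C"
    and "braided_group C A muA etaA DeA epA SA"
    and "braided_group_YD C A muA etaA DeA epA B act coact muB etaB DeB epB SB"
  shows "Cmp C (cross_antipode C A muA DeA SA B act coact SB)
               (cross_antipode C A muA DeA SA B act coact SB)
         = Cmp C (TM C (Cmp C SA SA) (Cmp C SB SB))
             (Cmp C (Br C B A) (Cmp C (Br C A B) (TM C (Id C A) (sigma_BA C SA B act coact))))"
proof -
  have B: "yd_mod C A muA etaA DeA epA B act coact" "yd_hom C A SB act coact act coact" "hom C SB B B"
    using assms(3) by (simp_all add: braided_group_YD_def hopf_ax_def Let_def)
  interpret cross_product_setting C A B muA etaA DeA epA SA act coact SB
    by unfold_locales (use assms(1,2) B in simp_all)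
  show ?thesis by (rule cross_antipode_square)
qed

end
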